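(* Let $x_i,y_i\in\mathbb{Z}$ ($1\le i\le N$) with $x_i\le x_{i+1}$ and $y_i\le y_{i+1}$ for all $i$. For $\sigma\in\mathbb{S}_N$ define the Laurent monomial $$h_\sigma(\xi_1,\dots,\xi_N)=\prod_{(b,a)}\frac{\xi_a}{\xi_b}\prod_{i=1}^N\xi_{\sigma(i)}^{\,x_i-y_{\sigma(i)}-1},$$ the first product over all inversions $(b,a)$ of $\sigma$, and for $\gamma\in\{1,\dots,N\}$ let $h^\gamma_\sigma$ be the function of $\eta$ and $\xi_\delta$ ($\delta\ne\gamma$) obtained by substituting $\xi_\gamma=\eta/\prod_{\delta\ne\gamma}\xi_\delta$ into $h_\sigma$. (i) If $\sigma,\sigma'\in\mathbb{S}_N$ differ only by an interchange of two adjacent entries $\alpha$ and $\beta$, and $\gamma\ne\alpha,\beta$, then $h^\gamma_\sigma|_{\xi_\alpha=\xi_\beta}=h^\gamma_{\sigma'}|_{\xi_\alpha=\xi_\beta}$. (ii) If moreover $\gamma$ appears to the left of $\alpha$ and $\beta$ and $\gamma>\alpha,\beta$, then the exponents of $\xi_\alpha$ and of $\xi_\beta$ in $h^\gamma_\sigma$ and in $h^\gamma_{\sigma'}$ are greater than or equal to $2$.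
   Context: Permutations are in one-line notation $\sigma(1)\cdots\sigma(N)$; an inversion $(b,a)$ of $\sigma$ is a pair of entries with $b>a$ and $b$ appearing to the left of $a$ in $\sigma$. *)

theory Defs
  imports Complex_Main "HOL-Combinatorics.Permutations"
begin

text \<open>Permutations of {1..N} in one-line notation: sigma i is the entry at position i.
  Inversions (b,a): b > a and b appears to the left of a.\<close>
definition inversions :: "nat \<Rightarrow> (nat \<Rightarrow> nat) \<Rightarrow> (nat \<times> nat) set" where
  "inversions N \<sigma> = {(\<sigma> i, \<sigma> j) | i j. 1 \<le> i \<and> i < j \<and> j \<le> N \<and> \<sigma> i > \<sigma> j}"

definition h_mon :: "nat \<Rightarrow> (nat \<Rightarrow> int) \<Rightarrow> (nat \<Rightarrow> int) \<Rightarrow> (nat \<Rightarrow> nat) \<Rightarrow> (nat \<Rightarrow> real) \<Rightarrow> real" where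
  "h_mon N x y \<sigma> \<xi> =
     (\<Prod>(b, a)\<in>inversions N \<sigma>. \<xi> a / \<xi> b) *
     (\<Prod>i\<in>{1..N}. \<xi> (\<sigma> i) powi (x i - y (\<sigma> i) - 1))"

text \<open>h^gamma_sigma: substitute xi_gamma = eta / prod_{delta ~= gamma} xi_delta;
  a function of eta and of xi_delta (delta ~= gamma); the value xi gamma is ignored.\<close>
definition h_sub :: "nat \<Rightarrow> (nat \<Rightarrow> int) \<Rightarrow> (nat \<Rightarrow> int) \<Rightarrow> (nat \<Rightarrow> nat) \<Rightarrow> nat \<Rightarrow> real \<Rightarrow> (nat \<Rightarrow> real) \<Rightarrow> real" where
  "h_sub N x y \<sigma> \<gamma> \<eta> \<xi> =
     h_mon N x y \<sigma> (\<xi>(\<gamma> := \<eta> / (\<Prod>\<delta>\<in>{1..N} - {\<gamma>}. \<xi> \<delta>)))"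

text \<open>The exponent of xi_delta in F is then e delta (unique).\<close>
definition laurent_monomial_exps ::
    "nat set \<Rightarrow> (real \<Rightarrow> (nat \<Rightarrow> real) \<Rightarrow> real) \<Rightarrow> int \<Rightarrow> (nat \<Rightarrow> int) \<Rightarrow> bool" where
  "laurent_monomial_exps V F c e \<longleftrightarrow>
     (\<forall>\<eta> \<xi>. \<eta> \<noteq> 0 \<longrightarrow> (\<forall>\<delta>\<in>V. \<xi> \<delta> \<noteq> 0) \<longrightarrow>
        F \<eta> \<xi> = \<eta> powi c * (\<Prod>\<delta>\<in>V. \<xi> \<delta> powi e \<delta>))"

end

theory Submission
  imports Defs
begin

text \<open>Counting the inversions in which an entry \<open>\<delta>\<close> of \<open>\<sigma>\<close> takes part (larger entries to
  its left, smaller entries to its right) shows that \<open>h\<^sub>\<sigma>\<close> is the monomial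
  \<open>\<Prod>\<^sub>\<delta> \<xi>\<^sub>\<delta>^E(\<delta>)\<close> with \<open>E(\<delta>) = x\<^sub>p - y\<^sub>\<delta> - 1 + p - \<delta>\<close>, where \<open>p = \<sigma>\<^sup>-\<^sup>1(\<delta>)\<close> is the position
  of \<open>\<delta>\<close>. The substitution for \<open>\<xi>\<^sub>\<gamma>\<close> turns it into \<open>\<eta>^E(\<gamma>) \<Prod>\<^sub>\<delta>\<^sub>\<noteq>\<^sub>\<gamma> \<xi>\<^sub>\<delta>^(E(\<delta>) - E(\<gamma>))\<close>.
  Transposing two entries changes only their own exponents and keeps their sum, so the two
  monomials agree on the diagonal \<open>\<xi>\<^sub>\<alpha> = \<xi>\<^sub>\<beta>\<close>. If \<open>\<gamma>\<close> stands to the left of a smaller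
  entry \<open>\<delta>\<close>, monotonicity of \<open>x\<close> and \<open>y\<close> gives \<open>E(\<delta>) - E(\<gamma>) \<ge> (p\<^sub>\<delta> - p\<^sub>\<gamma>) + (\<gamma> - \<delta>) \<ge> 2\<close>.\<close>

lemma card_Collect_split:
  assumes "finite A"
  shows "card {a\<in>A. P a} = card {a\<in>A. P a \<and> Q a} + card {a\<in>A. P a \<and> \<not> Q a}"
proof -
  have "{a\<in>A. P a} = {a\<in>A. P a \<and> Q a} \<union> {a\<in>A. P a \<and> \<not> Q a}"
    by blast
  then show ?thesis
    using assms by (simp add: card_Un_disjoint disjoint_iff)
qed

lemma consecutive_le_imp_le:
  fixes f :: "nat \<Rightarrow> 'a :: preorder"
  assumes "\<And>i. 1 \<le> i \<Longrightarrow> i < N \<Longrightarrow> f i \<le> f (i + 1)"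
    and "1 \<le> i" "i \<le> j" "j \<le> N"
  shows "f i \<le> f j"
  using \<open>i \<le> j\<close> \<open>j \<le> N\<close>
proof (induction j rule: dec_induct)
  case (step n)
  then have "f i \<le> f n" by simp
  also have "f n \<le> f (Suc n)" using assms(1)[of n] \<open>1 \<le> i\<close> step by simp
  finally show ?case .
qed simp

lemma prod_power_int_distrib:
  fixes f :: "'b \<Rightarrow> 'a :: field"
  shows "(\<Prod>i\<in>A. f i) powi m = (\<Prod>i\<in>A. f i powi m)"
  by (induction A rule: infinite_finite_induct) (auto simp: power_int_mult_distrib)

lemma prod_powi_eq_on_diagonal:
  fixes \<xi> :: "'b \<Rightarrow> 'a :: field"
  assumes "finite V" "\<alpha> \<in> V" "\<beta> \<in> V" "\<alpha> \<noteq> \<beta>" and diag: "\<xi> \<alpha> = \<xi> \<beta>" "\<xi> \<alpha> \<noteq> 0"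
    and other: "\<And>\<delta>. \<delta> \<in> V \<Longrightarrow> \<delta> \<noteq> \<alpha> \<Longrightarrow> \<delta> \<noteq> \<beta> \<Longrightarrow> e \<delta> = e' \<delta>"
    and sum: "e \<alpha> + e \<beta> = e' \<alpha> + e' \<beta>"
  shows "(\<Prod>\<delta>\<in>V. \<xi> \<delta> powi e \<delta>) = (\<Prod>\<delta>\<in>V. \<xi> \<delta> powi e' \<delta>)"
proof -
  have split: "(\<Prod>\<delta>\<in>V. \<xi> \<delta> powi f \<delta>) = (\<Prod>\<delta>\<in>V - {\<alpha>, \<beta>}. \<xi> \<delta> powi f \<delta>) * \<xi> \<alpha> powi (f \<alpha> + f \<beta>)" for f
  proof -
    have "(\<Prod>\<delta>\<in>V. \<xi> \<delta> powi f \<delta>) = (\<Prod>\<delta>\<in>V - {\<alpha>, \<beta>}. \<xi> \<delta> powi f \<delta>) * (\<Prod>\<delta>\<in>{\<alpha>, \<beta>}. \<xi> \<delta> powi f \<delta>)"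
      by (rule prod.subset_diff) (use assms(1-3) in auto)
    then show ?thesis
      using \<open>\<alpha> \<noteq> \<beta>\<close> diag by (simp add: power_int_add)
  qed
  have "(\<Prod>\<delta>\<in>V - {\<alpha>, \<beta>}. \<xi> \<delta> powi e \<delta>) = (\<Prod>\<delta>\<in>V - {\<alpha>, \<beta>}. \<xi> \<delta> powi e' \<delta>)"
    using other by (intro prod.cong) auto
  then show ?thesis
    unfolding split[of e] split[of e'] sum by simp
qed

lemma prod_powi_substitute_quotient:
  fixes \<xi> :: "'b \<Rightarrow> 'a :: field"
  assumes "finite S" "\<gamma> \<in> S" and nz: "\<forall>\<delta>\<in>S - {\<gamma>}. \<xi> \<delta> \<noteq> 0"
  shows "(\<Prod>\<delta>\<in>S. (\<xi>(\<gamma> := \<eta> / (\<Prod>\<delta>\<in>S - {\<gamma>}. \<xi> \<delta>))) \<delta> powi E \<delta>)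
       = \<eta> powi E \<gamma> * (\<Prod>\<delta>\<in>S - {\<gamma>}. \<xi> \<delta> powi (E \<delta> - E \<gamma>))"
proof -
  let ?V = "S - {\<gamma>}"
  define \<xi>' where "\<xi>' = \<xi>(\<gamma> := \<eta> / prod \<xi> ?V)"
  have "(\<Prod>\<delta>\<in>S. \<xi>' \<delta> powi E \<delta>) = \<xi>' \<gamma> powi E \<gamma> * (\<Prod>\<delta>\<in>?V. \<xi>' \<delta> powi E \<delta>)"
    by (rule prod.remove[OF assms(1,2)])
  also have "(\<Prod>\<delta>\<in>?V. \<xi>' \<delta> powi E \<delta>) = (\<Prod>\<delta>\<in>?V. \<xi> \<delta> powi E \<delta>)"
    by (rule prod.cong) (auto simp: \<xi>'_def)
  also have "\<xi>' \<gamma> powi E \<gamma> = \<eta> powi E \<gamma> / (\<Prod>\<delta>\<in>?V. \<xi> \<delta> powi E \<gamma>)"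
    by (simp add: \<xi>'_def power_int_divide_distrib prod_power_int_distrib)
  also have "\<eta> powi E \<gamma> / (\<Prod>\<delta>\<in>?V. \<xi> \<delta> powi E \<gamma>) * (\<Prod>\<delta>\<in>?V. \<xi> \<delta> powi E \<delta>)
      = \<eta> powi E \<gamma> * (\<Prod>\<delta>\<in>?V. \<xi> \<delta> powi E \<delta> / \<xi> \<delta> powi E \<gamma>)"
    by (simp add: prod_dividef)
  also have "\<dots> = \<eta> powi E \<gamma> * (\<Prod>\<delta>\<in>?V. \<xi> \<delta> powi (E \<delta> - E \<gamma>))"
    using nz by (simp add: power_int_diff)
  finally show ?thesis unfolding \<xi>'_def .
qed

lemma card_permutes_less:
  assumes perm: "\<sigma> permutes {1..N}" and j: "j \<in> {1..N}"
  shows "card {i\<in>{1..N}. \<sigma> i < \<sigma> j} = \<sigma> j - 1"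
proof -
  have "\<sigma> ` {i\<in>{1..N}. \<sigma> i < \<sigma> j} = {v\<in>\<sigma> ` {1..N}. v < \<sigma> j}"
    by blast
  also have "\<dots> = {1..<\<sigma> j}"
    using permutes_image[OF perm] permutes_in_image[OF perm, of j] j by auto
  finally have "\<sigma> ` {i\<in>{1..N}. \<sigma> i < \<sigma> j} = {1..<\<sigma> j}" .
  moreover have "inj_on \<sigma> {i\<in>{1..N}. \<sigma> i < \<sigma> j}"
    using permutes_inj_on[OF perm] by blast
  ultimately show ?thesis
    using card_image by fastforce
qed

lemma inversion_count_diff:
  assumes perm: "\<sigma> permutes {1..N}" and j: "j \<in> {1..N}"
  shows "int (card {i\<in>{1..N}. i < j \<and> \<sigma> j < \<sigma> i}) - int (card {i\<in>{1..N}. j < i \<and> \<sigma> i < \<sigma> j})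
         = int j - int (\<sigma> j)"
proof -
  let ?S = "{1..N}"
  have neq: "\<sigma> i \<noteq> \<sigma> j" if "i \<noteq> j" for i
    using permutes_inj[OF perm] that by (auto dest: injD)
  have "{i\<in>?S. i < j} = {1..<j}"
    using j by auto
  then have "j - 1 = card {i\<in>?S. i < j}"
    by simp
  also have "\<dots> = card {i\<in>?S. i < j \<and> \<sigma> j < \<sigma> i} + card {i\<in>?S. i < j \<and> \<sigma> i < \<sigma> j}"
    using neq by (subst card_Collect_split[OF finite_atLeastAtMost, where Q = "\<lambda>i. \<sigma> j < \<sigma> i"])
      (rule arg_cong2[where f = "(+)"]; rule arg_cong[where f = card]; auto simp: nat_neq_iff)
  finally have left: "j - 1 = \<dots>" .
  have "\<sigma> j - 1 = card {i\<in>?S. \<sigma> i < \<sigma> j}"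
    using card_permutes_less[OF perm j] ..
  also have "\<dots> = card {i\<in>?S. i < j \<and> \<sigma> i < \<sigma> j} + card {i\<in>?S. j < i \<and> \<sigma> i < \<sigma> j}"
    by (subst card_Collect_split[OF finite_atLeastAtMost, where Q = "\<lambda>i. i < j"])
      (rule arg_cong2[where f = "(+)"]; rule arg_cong[where f = card]; auto simp: not_less le_less)
  finally have right: "\<sigma> j - 1 = \<dots>" .
  have "1 \<le> j" "1 \<le> \<sigma> j" using j permutes_in_image[OF perm, of j] by auto
  with left right show ?thesis by linarith
qed

lemma inversions_eq_image:
  "inversions N \<sigma> = map_prod \<sigma> \<sigma> ` (SIGMA i:{1..N}. {j\<in>{1..N}. i < j \<and> \<sigma> j < \<sigma> i})"
  unfolding inversions_def by force

lemma prod_inversions_eq: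
  fixes \<xi> :: "nat \<Rightarrow> 'a :: field"
  assumes perm: "\<sigma> permutes {1..N}" and nz: "\<forall>\<delta>\<in>{1..N}. \<xi> \<delta> \<noteq> 0"
  shows "(\<Prod>(b, a)\<in>inversions N \<sigma>. \<xi> a / \<xi> b) = (\<Prod>j\<in>{1..N}. \<xi> (\<sigma> j) powi (int j - int (\<sigma> j)))"
proof -
  let ?S = "{1..N}"
  let ?L = "\<lambda>j. card {i\<in>?S. i < j \<and> \<sigma> j < \<sigma> i}"
  let ?R = "\<lambda>i. card {j\<in>?S. i < j \<and> \<sigma> j < \<sigma> i}"
  have inj: "inj_on (map_prod \<sigma> \<sigma>) A" for A
    using permutes_inj[OF perm] by (auto simp: inj_on_def dest: injD)
  have "(\<Prod>(b, a)\<in>inversions N \<sigma>. \<xi> a / \<xi> b)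
      = (\<Prod>i\<in>?S. \<Prod>j\<in>{j\<in>?S. i < j \<and> \<sigma> j < \<sigma> i}. \<xi> (\<sigma> j) / \<xi> (\<sigma> i))"
    unfolding inversions_eq_image prod.reindex[OF inj] by (simp add: prod.Sigma case_prod_beta')
  also have "\<dots> = (\<Prod>i\<in>?S. \<Prod>j\<in>{j\<in>?S. i < j \<and> \<sigma> j < \<sigma> i}. \<xi> (\<sigma> j))
                  / (\<Prod>i\<in>?S. \<xi> (\<sigma> i) ^ ?R i)"
    by (simp add: prod_dividef)
  also have "(\<Prod>i\<in>?S. \<Prod>j\<in>{j\<in>?S. i < j \<and> \<sigma> j < \<sigma> i}. \<xi> (\<sigma> j)) = (\<Prod>j\<in>?S. \<xi> (\<sigma> j) ^ ?L j)"
    by (subst prod.swap_restrict) auto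
  also have "(\<Prod>j\<in>?S. \<xi> (\<sigma> j) ^ ?L j) / (\<Prod>i\<in>?S. \<xi> (\<sigma> i) ^ ?R i)
      = (\<Prod>j\<in>?S. \<xi> (\<sigma> j) powi (int (?L j) - int (?R j)))"
    using nz permutes_in_image[OF perm] by (simp add: prod_dividef[symmetric] power_int_diff)
  also have "\<dots> = (\<Prod>j\<in>?S. \<xi> (\<sigma> j) powi (int j - int (\<sigma> j)))"
    using inversion_count_diff[OF perm] by simp
  finally show ?thesis .
qed

definition h_exponent :: "(nat \<Rightarrow> int) \<Rightarrow> (nat \<Rightarrow> int) \<Rightarrow> (nat \<Rightarrow> nat) \<Rightarrow> nat \<Rightarrow> int" where
  "h_exponent x y \<sigma> \<delta> = x (inv \<sigma> \<delta>) - y \<delta> - 1 + int (inv \<sigma> \<delta>) - int \<delta>"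

lemma h_mon_eq_prod_powi:
  assumes perm: "\<sigma> permutes {1..N}" and nz: "\<forall>\<delta>\<in>{1..N}. \<xi> \<delta> \<noteq> 0"
  shows "h_mon N x y \<sigma> \<xi> = (\<Prod>\<delta>\<in>{1..N}. \<xi> \<delta> powi h_exponent x y \<sigma> \<delta>)"
proof -
  have "h_mon N x y \<sigma> \<xi> = (\<Prod>j\<in>{1..N}. \<xi> (\<sigma> j) powi (int j - int (\<sigma> j)) * \<xi> (\<sigma> j) powi (x j - y (\<sigma> j) - 1))"
    unfolding h_mon_def prod_inversions_eq[OF perm nz] by (simp add: prod.distrib)
  also have "\<dots> = (\<Prod>j\<in>{1..N}. \<xi> (\<sigma> j) powi h_exponent x y \<sigma> (\<sigma> j))"
    using nz permutes_in_image[OF perm]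
    by (intro prod.cong) (simp_all flip: power_int_add add: h_exponent_def permutes_inverses[OF perm] algebra_simps)
  also have "\<dots> = (\<Prod>\<delta>\<in>{1..N}. \<xi> \<delta> powi h_exponent x y \<sigma> \<delta>)"
    by (rule prod.reindex_bij_betw[OF permutes_imp_bij[OF perm]])
  finally show ?thesis .
qed

lemma h_exponent_transpose_other:
  assumes "bij \<sigma>" "\<delta> \<noteq> \<sigma> i" "\<delta> \<noteq> \<sigma> j"
  shows "h_exponent x y (\<sigma> \<circ> transpose i j) \<delta> = h_exponent x y \<sigma> \<delta>"
proof -
  have "inv \<sigma> \<delta> \<noteq> i" "inv \<sigma> \<delta> \<noteq> j"
    using assms by (metis bij_inv_eq_iff)+
  then show ?thesis
    using assms by (simp add: h_exponent_def o_inv_distrib transpose_apply_other)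
qed

lemma h_exponent_transpose_sum:
  assumes "bij \<sigma>"
  shows "h_exponent x y (\<sigma> \<circ> transpose i j) (\<sigma> i) + h_exponent x y (\<sigma> \<circ> transpose i j) (\<sigma> j)
       = h_exponent x y \<sigma> (\<sigma> i) + h_exponent x y \<sigma> (\<sigma> j)"
  using assms by (simp add: h_exponent_def o_inv_distrib bij_is_inj)

lemma h_exponent_diff_ge_2:
  assumes x_mono: "\<And>i. 1 \<le> i \<Longrightarrow> i < N \<Longrightarrow> x i \<le> x (i + 1)"
    and y_mono: "\<And>i. 1 \<le> i \<Longrightarrow> i < N \<Longrightarrow> y i \<le> y (i + 1)"
    and perm: "\<sigma> permutes {1..N}" and pos: "1 \<le> q" "q < p" "p \<le> N" and val: "\<sigma> p < \<sigma> q"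
  shows "h_exponent x y \<sigma> (\<sigma> p) - h_exponent x y \<sigma> (\<sigma> q) \<ge> 2"
proof -
  have "\<sigma> p \<in> {1..N}" "\<sigma> q \<in> {1..N}"
    using pos permutes_in_image[OF perm, of p] permutes_in_image[OF perm, of q] by simp_all
  then have "x q \<le> x p" "y (\<sigma> p) \<le> y (\<sigma> q)"
    using consecutive_le_imp_le[of N x] consecutive_le_imp_le[of N y] x_mono y_mono pos val by auto
  then show ?thesis
    using pos val by (simp add: h_exponent_def permutes_inverses[OF perm])
qed

lemma laurent_monomial_exps_h_sub:
  assumes perm: "\<sigma> permutes {1..N}" and \<gamma>: "\<gamma> \<in> {1..N}"
  shows "laurent_monomial_exps ({1..N} - {\<gamma>}) (h_sub N x y \<sigma> \<gamma>)
           (h_exponent x y \<sigma> \<gamma>) (\<lambda>\<delta>. h_exponent x y \<sigma> \<delta> - h_exponent x y \<sigma> \<gamma>)"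
  unfolding laurent_monomial_exps_def
proof (intro allI impI)
  fix \<eta> :: real and \<xi> :: "nat \<Rightarrow> real"
  assume "\<eta> \<noteq> 0" and nz: "\<forall>\<delta>\<in>{1..N} - {\<gamma>}. \<xi> \<delta> \<noteq> 0"
  then have "\<forall>\<delta>\<in>{1..N}. (\<xi>(\<gamma> := \<eta> / (\<Prod>\<delta>\<in>{1..N} - {\<gamma>}. \<xi> \<delta>))) \<delta> \<noteq> 0"
    by simp
  then have "h_sub N x y \<sigma> \<gamma> \<eta> \<xi>
      = (\<Prod>\<delta>\<in>{1..N}. (\<xi>(\<gamma> := \<eta> / (\<Prod>\<delta>\<in>{1..N} - {\<gamma>}. \<xi> \<delta>))) \<delta> powi h_exponent x y \<sigma> \<delta>)"
    unfolding h_sub_def by (rule h_mon_eq_prod_powi[OF perm])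
  also have "\<dots> = \<eta> powi h_exponent x y \<sigma> \<gamma>
      * (\<Prod>\<delta>\<in>{1..N} - {\<gamma>}. \<xi> \<delta> powi (h_exponent x y \<sigma> \<delta> - h_exponent x y \<sigma> \<gamma>))"
    by (rule prod_powi_substitute_quotient) (use nz \<gamma> in auto)
  finally show "h_sub N x y \<sigma> \<gamma> \<eta> \<xi> = \<dots>" .
qed

lemma h_sub_transpose_eq_on_diagonal:
  assumes perm: "\<sigma> permutes {1..N}" and ij: "i \<in> {1..N}" "j \<in> {1..N}" "i \<noteq> j"
    and \<gamma>: "\<gamma> \<in> {1..N}" "\<gamma> \<noteq> \<sigma> i" "\<gamma> \<noteq> \<sigma> j"
    and nz: "\<eta> \<noteq> 0" "\<forall>\<delta>\<in>{1..N} - {\<gamma>}. \<xi> \<delta> \<noteq> 0" and diag: "\<xi> (\<sigma> i) = \<xi> (\<sigma> j)"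
  shows "h_sub N x y \<sigma> \<gamma> \<eta> \<xi> = h_sub N x y (\<sigma> \<circ> transpose i j) \<gamma> \<eta> \<xi>"
proof -
  let ?V = "{1..N} - {\<gamma>}" and ?\<tau> = "\<sigma> \<circ> transpose i j"
  let ?E = "h_exponent x y \<sigma>" and ?E' = "h_exponent x y ?\<tau>"
  have bij: "bij \<sigma>"
    using perm by (rule permutes_bij)
  have perm': "?\<tau> permutes {1..N}"
    using ij by (intro permutes_compose[OF permutes_swap_id perm])
  have "\<sigma> i \<in> {1..N}" "\<sigma> j \<in> {1..N}"
    using ij permutes_in_image[OF perm, of i] permutes_in_image[OF perm, of j] by simp_all
  then have V: "\<sigma> i \<in> ?V" "\<sigma> j \<in> ?V"
    using \<gamma> by auto
  have other: "?E' \<delta> = ?E \<delta>" if "\<delta> \<noteq> \<sigma> i" "\<delta> \<noteq> \<sigma> j" for \<delta>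
    using bij that by (rule h_exponent_transpose_other)
  then have same_\<gamma>: "?E' \<gamma> = ?E \<gamma>"
    using \<gamma> by blast
  have "h_sub N x y \<sigma> \<gamma> \<eta> \<xi> = \<eta> powi ?E \<gamma> * (\<Prod>\<delta>\<in>?V. \<xi> \<delta> powi (?E \<delta> - ?E \<gamma>))"
    using laurent_monomial_exps_h_sub[OF perm \<gamma>(1)] nz unfolding laurent_monomial_exps_def by blast
  also have "(\<Prod>\<delta>\<in>?V. \<xi> \<delta> powi (?E \<delta> - ?E \<gamma>)) = (\<Prod>\<delta>\<in>?V. \<xi> \<delta> powi (?E' \<delta> - ?E' \<gamma>))"
  proof (rule prod_powi_eq_on_diagonal[where \<alpha> = "\<sigma> i" and \<beta> = "\<sigma> j"])
    show "\<sigma> i \<noteq> \<sigma> j"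
      using ij inj_eq[OF permutes_inj[OF perm]] by simp
    show "?E (\<sigma> i) - ?E \<gamma> + (?E (\<sigma> j) - ?E \<gamma>) = ?E' (\<sigma> i) - ?E' \<gamma> + (?E' (\<sigma> j) - ?E' \<gamma>)"
      using h_exponent_transpose_sum[OF bij, of x y i j] same_\<gamma> by simp
  qed (use V nz diag other same_\<gamma> in auto)
  also have "\<eta> powi ?E \<gamma> * \<dots> = h_sub N x y ?\<tau> \<gamma> \<eta> \<xi>"
    using laurent_monomial_exps_h_sub[OF perm' \<gamma>(1)] nz same_\<gamma> unfolding laurent_monomial_exps_def by simp
  finally show ?thesis .
qed

lemma h_sub_exponents_ge_2:
  assumes x_mono: "\<And>i. 1 \<le> i \<Longrightarrow> i < N \<Longrightarrow> x i \<le> x (i + 1)"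
    and y_mono: "\<And>i. 1 \<le> i \<Longrightarrow> i < N \<Longrightarrow> y i \<le> y (i + 1)"
    and perm: "\<sigma> permutes {1..N}" and pos: "1 \<le> j" "j < p" "j < q" "p \<le> N" "q \<le> N"
    and val: "\<sigma> p < \<sigma> j" "\<sigma> q < \<sigma> j"
  shows "\<exists>c e. laurent_monomial_exps ({1..N} - {\<sigma> j}) (h_sub N x y \<sigma> (\<sigma> j)) c e
           \<and> e (\<sigma> p) \<ge> 2 \<and> e (\<sigma> q) \<ge> 2"
proof -
  have "\<sigma> j \<in> {1..N}"
    using pos permutes_in_image[OF perm, of j] by simp
  moreover have "h_exponent x y \<sigma> (\<sigma> p) - h_exponent x y \<sigma> (\<sigma> j) \<ge> 2"
    by (rule h_exponent_diff_ge_2[where \<sigma> = \<sigma> and p = p and q = j]) (use assms in auto)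
  moreover have "h_exponent x y \<sigma> (\<sigma> q) - h_exponent x y \<sigma> (\<sigma> j) \<ge> 2"
    by (rule h_exponent_diff_ge_2[where \<sigma> = \<sigma> and p = q and q = j]) (use assms in auto)
  ultimately show ?thesis
    using laurent_monomial_exps_h_sub[OF perm] by blast
qed

theorem lemma3p6:
  fixes N :: nat and x y :: "nat \<Rightarrow> int" and \<sigma> \<sigma>' :: "nat \<Rightarrow> nat"
    and k \<alpha> \<beta> \<gamma> :: nat
  assumes x_mono: "\<And>i. 1 \<le> i \<Longrightarrow> i < N \<Longrightarrow> x i \<le> x (i + 1)"
    and y_mono: "\<And>i. 1 \<le> i \<Longrightarrow> i < N \<Longrightarrow> y i \<le> y (i + 1)"
    and perm: "\<sigma> permutes {1..N}"
    and k: "1 \<le> k" "k < N"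
    and \<alpha>: "\<sigma> k = \<alpha>" and \<beta>: "\<sigma> (k + 1) = \<beta>"
    and \<sigma>': "\<sigma>' = \<sigma>(k := \<beta>, k + 1 := \<alpha>)"
    and \<gamma>: "\<gamma> \<in> {1..N}" "\<gamma> \<noteq> \<alpha>" "\<gamma> \<noteq> \<beta>"
  shows "(\<forall>\<eta> \<xi>. \<eta> \<noteq> 0 \<longrightarrow> (\<forall>\<delta>\<in>{1..N} - {\<gamma>}. \<xi> \<delta> \<noteq> 0) \<longrightarrow> \<xi> \<alpha> = \<xi> \<beta> \<longrightarrow>
            h_sub N x y \<sigma> \<gamma> \<eta> \<xi> = h_sub N x y \<sigma>' \<gamma> \<eta> \<xi>)
       \<and> ((\<exists>j. 1 \<le> j \<and> j < k \<and> \<sigma> j = \<gamma>) \<and> \<gamma> > \<alpha> \<and> \<gamma> > \<beta> \<longrightarrow>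
            (\<exists>c e. laurent_monomial_exps ({1..N} - {\<gamma>}) (h_sub N x y \<sigma> \<gamma>) c e
                   \<and> e \<alpha> \<ge> 2 \<and> e \<beta> \<ge> 2)
          \<and> (\<exists>c e. laurent_monomial_exps ({1..N} - {\<gamma>}) (h_sub N x y \<sigma>' \<gamma>) c e
                   \<and> e \<alpha> \<ge> 2 \<and> e \<beta> \<ge> 2))"
proof -
  have \<sigma>'_transpose: "\<sigma>' = \<sigma> \<circ> transpose k (k + 1)"
    using \<alpha> \<beta> by (auto simp: \<sigma>' transpose_def)
  have perm': "\<sigma>' permutes {1..N}"
    unfolding \<sigma>'_transpose using k by (intro permutes_compose[OF permutes_swap_id perm]) auto
  have part_i: "h_sub N x y \<sigma> \<gamma> \<eta> \<xi> = h_sub N x y \<sigma>' \<gamma> \<eta> \<xi>"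
    if "\<eta> \<noteq> 0" "\<forall>\<delta>\<in>{1..N} - {\<gamma>}. \<xi> \<delta> \<noteq> 0" "\<xi> \<alpha> = \<xi> \<beta>" for \<eta> \<xi>
    unfolding \<sigma>'_transpose
    by (rule h_sub_transpose_eq_on_diagonal[OF perm]) (use that k \<alpha> \<beta> \<gamma> in simp_all)
  have part_ii: "(\<exists>c e. laurent_monomial_exps ({1..N} - {\<gamma>}) (h_sub N x y \<sigma> \<gamma>) c e \<and> e \<alpha> \<ge> 2 \<and> e \<beta> \<ge> 2)
      \<and> (\<exists>c e. laurent_monomial_exps ({1..N} - {\<gamma>}) (h_sub N x y \<sigma>' \<gamma>) c e \<and> e \<alpha> \<ge> 2 \<and> e \<beta> \<ge> 2)"
    if j: "1 \<le> j" "j < k" "\<sigma> j = \<gamma>" and "\<gamma> > \<alpha>" "\<gamma> > \<beta>" for j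
  proof
    show "\<exists>c e. laurent_monomial_exps ({1..N} - {\<gamma>}) (h_sub N x y \<sigma> \<gamma>) c e \<and> e \<alpha> \<ge> 2 \<and> e \<beta> \<ge> 2"
      using h_sub_exponents_ge_2[where \<sigma> = \<sigma> and j = j and p = k and q = "k + 1"] x_mono y_mono perm that k \<alpha> \<beta>
      by simp
    have "\<sigma>' j = \<gamma>" "\<sigma>' k = \<beta>" "\<sigma>' (k + 1) = \<alpha>"
      using j by (simp_all add: \<sigma>')
    then show "\<exists>c e. laurent_monomial_exps ({1..N} - {\<gamma>}) (h_sub N x y \<sigma>' \<gamma>) c e \<and> e \<alpha> \<ge> 2 \<and> e \<beta> \<ge> 2"
      using h_sub_exponents_ge_2[where \<sigma> = \<sigma>' and j = j and p = "k + 1" and q = k] x_mono y_mono perm' that k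
      by simp
  qed
  show ?thesis
    using part_i part_ii by blast
qed

end
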